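(* Let $F\in\mathbb{R}[x_1,\dots,x_n]$ be a form (homogeneous polynomial) with $F(X)>0$ for all $X\in\mathbb{T}_n=\{(x_1,\dots,x_n): x_i\ge0,\ \sum_i x_i=1\}$. Then the sequence of sets $\{\mathrm{SDS}^{(m)}(F)\}_{m\ge1}$ is positively terminating, i.e., there exists a positive integer $k$ such that every form in $\mathrm{SDS}^{(k)}(F)$ has all coefficients nonnegative.
   Context: $W_n$ is the $n\times n$ matrix with $(W_n)_{ij}=1/j$ for $i\le j$ and $0$ for $i>j$. For a permutation $[k_1\cdots k_n]$ of $1,\dots,n$, $P_{[k_1\cdots k_n]}$ is the permutation matrix with $1$ in positions $(i,k_i)$ and $0$ elsewhere, and $B_{[k_1\cdots k_n]}=P_{[k_1\cdots k_n]}W_n$; $PW_n$ denotes the set of these $n!$ matrices. For $m\ge1$, $\mathrm{SDS}^{(m)}(F)$ is the set of forms $F(B_{[\alpha_1]}B_{[\alpha_2]}\cdots B_{[\alpha_m]}X^{\mathrm{Tr}})$, $X=(x_1,\dots,x_n)$, as $B_{[\alpha_1]},\dots,B_{[\alpha_m]}$ range independently over $PW_n$. *)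

theory Defs
  imports Complex_Main "HOL-Library.Poly_Mapping" "HOL-Combinatorics.Permutations"
begin

text \<open>Real polynomials in variables x_0, x_1, ... (x_i here is x_{i+1} of the paper),
  represented as finitely supported maps from monomials (exponent vectors) to coefficients.\<close>
type_synonym mpoly = "(nat \<Rightarrow>\<^sub>0 nat) \<Rightarrow>\<^sub>0 real"

definition coeff :: "mpoly \<Rightarrow> (nat \<Rightarrow>\<^sub>0 nat) \<Rightarrow> real" where
  "coeff F m = Poly_Mapping.lookup F m"

definition mdeg :: "(nat \<Rightarrow>\<^sub>0 nat) \<Rightarrow> nat" where
  "mdeg m = (\<Sum>i\<in>Poly_Mapping.keys m. Poly_Mapping.lookup m i)"

definition in_vars :: "nat \<Rightarrow> mpoly \<Rightarrow> bool" where
  "in_vars n F \<longleftrightarrow> (\<forall>m\<in>Poly_Mapping.keys F. Poly_Mapping.keys m \<subseteq> {..<n})"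

definition is_form :: "mpoly \<Rightarrow> bool" where
  "is_form F \<longleftrightarrow> (\<exists>d. \<forall>m\<in>Poly_Mapping.keys F. mdeg m = d)"

definition eval :: "mpoly \<Rightarrow> (nat \<Rightarrow> real) \<Rightarrow> real" where
  "eval F x = (\<Sum>m\<in>Poly_Mapping.keys F. Poly_Mapping.lookup F m * (\<Prod>i\<in>Poly_Mapping.keys m. x i ^ Poly_Mapping.lookup m i))"

definition subst :: "mpoly \<Rightarrow> (nat \<Rightarrow> mpoly) \<Rightarrow> mpoly" where
  "subst F L = (\<Sum>m\<in>Poly_Mapping.keys F. Poly_Mapping.single 0 (Poly_Mapping.lookup F m) * (\<Prod>i\<in>Poly_Mapping.keys m. L i ^ Poly_Mapping.lookup m i))"

text \<open>n x n matrices as functions on indices 0..n-1\<close>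
type_synonym mat = "nat \<Rightarrow> nat \<Rightarrow> real"

definition mmult :: "nat \<Rightarrow> mat \<Rightarrow> mat \<Rightarrow> mat" where
  "mmult n A B = (\<lambda>i j. \<Sum>l<n. A i l * B l j)"

definition idm :: mat where
  "idm = (\<lambda>i j. if i = j then 1 else 0)"

definition mprod_list :: "nat \<Rightarrow> mat list \<Rightarrow> mat" where
  "mprod_list n As = foldr (mmult n) As idm"

text \<open>(W_n)_{ij} = 1/j for i <= j (1-based); 0-based: 1/(j+1) for i <= j.\<close>
definition Wmat :: "nat \<Rightarrow> mat" where
  "Wmat n = (\<lambda>i j. if i \<le> j then 1 / real (j + 1) else 0)"

definition Pmat :: "(nat \<Rightarrow> nat) \<Rightarrow> mat" where
  "Pmat k = (\<lambda>i j. if j = k i then 1 else 0)"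

definition PW :: "nat \<Rightarrow> mat set" where
  "PW n = {mmult n (Pmat k) (Wmat n) | k. k permutes {..<n}}"

definition lin_subst :: "nat \<Rightarrow> mat \<Rightarrow> nat \<Rightarrow> mpoly" where
  "lin_subst n B i = (\<Sum>j<n. Poly_Mapping.single (Poly_Mapping.single j 1) (B i j))"

definition SDS :: "nat \<Rightarrow> nat \<Rightarrow> mpoly \<Rightarrow> mpoly set" where
  "SDS n m F = {subst F (lin_subst n (mprod_list n Bs)) | Bs.
                  length Bs = m \<and> (\<forall>B\<in>set Bs. B \<in> PW n)}"

end

theory Submission
  imports Defs "HOL-Analysis.Function_Topology"
begin

text \<open>Every matrix of \<open>PW\<^sub>n\<close> is column stochastic and has a row (the one with \<open>k\<^sub>i = 1\<close>)
  whose entries are all at least \<open>1/n\<close>. Multiplying by such a matrix therefore contracts the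
  \<open>\<ell>\<^sup>1\<close>-distance between any two columns by the factor \<open>1 - 1/n\<close>, so all columns of a product of
  \<open>m\<close> of them lie within \<open>2 (1 - 1/n)\<^sup>m\<close> of a common point \<open>p\<close> of the simplex. Substituting
  the product into a form \<open>F\<close> of degree \<open>d\<close> then gives a form whose coefficient vector is
  \<open>\<ell>\<^sup>1\<close>-close to that of \<open>F(p) (x\<^sub>1 + \<dots> + x\<^sub>n)\<^sup>d\<close>, all of whose degree-\<open>d\<close> coefficients are at
  least \<open>F(p)\<close>, hence at least the (positive) minimum of \<open>F\<close> on the simplex. For large \<open>m\<close> the
  error is below that minimum.\<close>

section \<open>Products of column-stochastic matrices\<close>

definition col_stochastic :: "nat \<Rightarrow> mat \<Rightarrow> bool" where
  "col_stochastic n B \<longleftrightarrow> (\<forall>i<n. \<forall>j<n. 0 \<le> B i j) \<and> (\<forall>j<n. (\<Sum>i<n. B i j) = 1)"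

lemma col_stochastic_le_1:
  assumes "col_stochastic n B" "i < n" "j < n"
  shows "B i j \<le> 1"
proof -
  have "B i j \<le> (\<Sum>i<n. B i j)"
    using assms by (intro member_le_sum) (auto simp: col_stochastic_def)
  then show ?thesis
    using assms by (simp add: col_stochastic_def)
qed

lemma col_stochastic_idm: "col_stochastic n idm"
  by (simp add: col_stochastic_def idm_def)

lemma col_stochastic_mmult:
  assumes A: "col_stochastic n A" and B: "col_stochastic n B"
  shows "col_stochastic n (mmult n A B)"
  unfolding col_stochastic_def
proof (intro conjI allI impI)
  fix i j assume "i < n" "j < n"
  then show "0 \<le> mmult n A B i j"
    using A B by (auto simp: col_stochastic_def mmult_def intro!: sum_nonneg)
next
  fix j assume "j < n"
  have "(\<Sum>i<n. mmult n A B i j) = (\<Sum>l<n. (\<Sum>i<n. A i l) * B l j)"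
    by (simp add: mmult_def sum_distrib_right) (rule sum.swap)
  also have "\<dots> = 1"
    using A B \<open>j < n\<close> by (simp add: col_stochastic_def)
  finally show "(\<Sum>i<n. mmult n A B i j) = 1" .
qed

lemma mprod_list_Cons: "mprod_list n (B # Bs) = mmult n B (mprod_list n Bs)"
  by (simp add: mprod_list_def)

lemma mmult_Pmat_Wmat:
  assumes "k permutes {..<n}" "i < n"
  shows "mmult n (Pmat k) (Wmat n) i j = (if k i \<le> j then 1 / real (j + 1) else 0)"
proof -
  have "k i < n"
    using permutes_in_image[OF assms(1)] assms(2) by simp
  then have "mmult n (Pmat k) (Wmat n) i j = Wmat n (k i) j"
    by (simp add: mmult_def Pmat_def if_distrib[of "\<lambda>c. c * _"] cong: if_cong)
  then show ?thesis
    by (simp add: Wmat_def)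
qed

lemma card_permutes_le:
  assumes k: "k permutes {..<n}" and "j < n"
  shows "card {i. i < n \<and> k i \<le> j} = j + 1"
proof -
  have "k ` {i. i < n \<and> k i \<le> j} = {..j}"
  proof
    show "{..j} \<subseteq> k ` {i. i < n \<and> k i \<le> j}"
    proof
      fix y assume "y \<in> {..j}"
      then have "y \<in> k ` {..<n}"
        using permutes_image[OF k] \<open>j < n\<close> by auto
      then show "y \<in> k ` {i. i < n \<and> k i \<le> j}"
        using \<open>y \<in> {..j}\<close> by auto
    qed
  qed auto
  moreover have "inj_on k {i. i < n \<and> k i \<le> j}"
    using permutes_inj[OF k] by (simp add: inj_on_def)
  ultimately show ?thesis
    by (metis card_atMost card_image Suc_eq_plus1)
qed

lemma PW_col_stochastic:
  assumes "B \<in> PW n"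
  shows "col_stochastic n B"
proof -
  obtain k where k: "k permutes {..<n}" and B: "B = mmult n (Pmat k) (Wmat n)"
    using assms unfolding PW_def by blast
  have "(\<Sum>i<n. B i j) = 1" if "j < n" for j
  proof -
    have "(\<Sum>i<n. B i j) = (\<Sum>i\<in>{i. i < n \<and> k i \<le> j}. 1 / real (j + 1))"
      by (simp add: B mmult_Pmat_Wmat[OF k] sum.If_cases lessThan_def Collect_conj_eq Int_commute)
    then show ?thesis
      using card_permutes_le[OF k that] by simp
  qed
  then show ?thesis
    by (simp add: col_stochastic_def B mmult_Pmat_Wmat[OF k])
qed

lemma PW_row_ge:
  assumes "B \<in> PW n" "n \<ge> 1"
  shows "\<exists>r<n. \<forall>j<n. 1 / real n \<le> B r j"
proof -
  obtain k where k: "k permutes {..<n}" and B: "B = mmult n (Pmat k) (Wmat n)"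
    using assms unfolding PW_def by blast
  obtain r where "r < n" "k r = 0"
    using permutes_image[OF k] assms(2) by (metis imageE lessThan_iff less_one order_less_le_trans)
  then have "\<forall>j<n. 1 / real n \<le> B r j"
    by (auto simp: B mmult_Pmat_Wmat[OF k] intro!: divide_left_mono)
  then show ?thesis
    using \<open>r < n\<close> by blast
qed

text \<open>Dobrushin's argument: lowering row \<open>r\<close> by \<open>c\<close> keeps the entries nonnegative, makes every
  column sum \<open>1 - c\<close>, and does not change \<open>B v\<close> because \<open>v\<close> sums to zero.\<close>
lemma col_stochastic_contraction:
  fixes v :: "nat \<Rightarrow> real"
  assumes B: "col_stochastic n B" and r: "r < n" "\<forall>l<n. c \<le> B r l"
    and v: "(\<Sum>l<n. v l) = 0"
  shows "(\<Sum>i<n. \<bar>\<Sum>l<n. B i l * v l\<bar>) \<le> (1 - c) * (\<Sum>l<n. \<bar>v l\<bar>)"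
proof -
  define B' where "B' i l = B i l - (if i = r then c else 0)" for i l
  have same: "(\<Sum>l<n. B i l * v l) = (\<Sum>l<n. B' i l * v l)" for i
    using v by (simp add: B'_def left_diff_distrib sum_subtractf flip: sum_distrib_left)
  have nonneg: "0 \<le> B' i l" if "i < n" "l < n" for i l
    using B r that by (auto simp: B'_def col_stochastic_def)
  have "(\<Sum>i<n. \<bar>\<Sum>l<n. B i l * v l\<bar>) \<le> (\<Sum>i<n. \<Sum>l<n. B' i l * \<bar>v l\<bar>)"
  proof (rule sum_mono)
    fix i assume "i \<in> {..<n}"
    have "\<bar>\<Sum>l<n. B' i l * v l\<bar> \<le> (\<Sum>l<n. \<bar>B' i l * v l\<bar>)"
      by (rule sum_abs)
    also have "\<dots> = (\<Sum>l<n. B' i l * \<bar>v l\<bar>)"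
      using nonneg \<open>i \<in> {..<n}\<close> by (intro sum.cong) (auto simp: abs_mult)
    finally show "\<bar>\<Sum>l<n. B i l * v l\<bar> \<le> (\<Sum>l<n. B' i l * \<bar>v l\<bar>)"
      by (simp add: same)
  qed
  also have "\<dots> = (\<Sum>l<n. (\<Sum>i<n. B' i l) * \<bar>v l\<bar>)"
    by (subst sum.swap) (simp add: sum_distrib_right)
  also have "\<dots> = (\<Sum>l<n. (1 - c) * \<bar>v l\<bar>)"
    using B r by (intro sum.cong) (auto simp: B'_def sum_subtractf col_stochastic_def)
  finally show ?thesis
    by (simp add: sum_distrib_left)
qed

lemma col_stochastic_mprod_list_PW:
  "\<forall>B\<in>set Bs. B \<in> PW n \<Longrightarrow> col_stochastic n (mprod_list n Bs)"
  by (induction Bs)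
    (auto simp: mprod_list_Cons col_stochastic_mmult PW_col_stochastic,
     simp add: mprod_list_def col_stochastic_idm)

lemma mprod_list_PW_col_dist:
  assumes "\<forall>B\<in>set Bs. B \<in> PW n" "n \<ge> 1" "j < n" "j' < n"
  shows "(\<Sum>i<n. \<bar>mprod_list n Bs i j - mprod_list n Bs i j'\<bar>) \<le> 2 * (1 - 1 / real n) ^ length Bs"
  using assms
proof (induction Bs arbitrary: j j')
  case Nil
  have "(\<Sum>i<n. \<bar>idm i j - idm i j'\<bar>) \<le> (\<Sum>i<n. idm i j + idm i j')"
    by (intro sum_mono) (auto simp: idm_def)
  also have "\<dots> = 2"
    using Nil by (simp add: sum.distrib idm_def)
  finally show ?case
    by (simp add: mprod_list_def)
next
  case (Cons B Bs)
  define N where "N = mprod_list n Bs"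
  define v where "v l = N l j - N l j'" for l
  have B: "B \<in> PW n" and Bs: "\<forall>B\<in>set Bs. B \<in> PW n"
    using Cons.prems(1) by auto
  obtain r where r: "r < n" "\<forall>l<n. 1 / real n \<le> B r l"
    using PW_row_ge[OF B Cons.prems(2)] by blast
  have v0: "(\<Sum>l<n. v l) = 0"
    using col_stochastic_mprod_list_PW[OF Bs] Cons.prems(3,4)
    by (simp add: v_def N_def sum_subtractf col_stochastic_def)
  have "(\<Sum>i<n. \<bar>mprod_list n (B # Bs) i j - mprod_list n (B # Bs) i j'\<bar>)
      = (\<Sum>i<n. \<bar>\<Sum>l<n. B i l * v l\<bar>)"
    by (simp add: mprod_list_Cons mmult_def v_def N_def right_diff_distrib sum_subtractf)
  also have "\<dots> \<le> (1 - 1 / real n) * (\<Sum>l<n. \<bar>v l\<bar>)"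
    by (rule col_stochastic_contraction[OF PW_col_stochastic[OF B] r v0])
  also have "\<dots> \<le> (1 - 1 / real n) * (2 * (1 - 1 / real n) ^ length Bs)"
    using Cons.IH[OF Bs Cons.prems(2-4)] Cons.prems(2)
    by (intro mult_left_mono) (auto simp: v_def N_def)
  finally show ?case
    by simp
qed

section \<open>The \<open>\<ell>\<^sup>1\<close>-norm of the coefficients\<close>

definition norm1 :: "('a \<Rightarrow>\<^sub>0 real) \<Rightarrow> real" where
  "norm1 P = (\<Sum>m\<in>Poly_Mapping.keys P. \<bar>Poly_Mapping.lookup P m\<bar>)"

lemma norm1_superset:
  assumes "finite A" "Poly_Mapping.keys P \<subseteq> A"
  shows "norm1 P = (\<Sum>m\<in>A. \<bar>Poly_Mapping.lookup P m\<bar>)"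
  unfolding norm1_def
  by (rule sum.mono_neutral_left) (use assms in \<open>auto simp: in_keys_iff\<close>)

lemma norm1_nonneg: "0 \<le> norm1 P"
  by (simp add: norm1_def sum_nonneg)

lemma abs_lookup_le_norm1: "\<bar>Poly_Mapping.lookup P m\<bar> \<le> norm1 P"
proof (cases "m \<in> Poly_Mapping.keys P")
  case True
  then show ?thesis
    unfolding norm1_def by (intro member_le_sum) auto
next
  case False
  then show ?thesis
    by (simp add: in_keys_iff norm1_nonneg)
qed

lemma norm1_single [simp]: "norm1 (Poly_Mapping.single a c) = \<bar>c\<bar>"
  by (cases "c = 0") (auto simp: norm1_def)

lemma norm1_add: "norm1 (P + Q) \<le> norm1 P + norm1 Q"
proof -
  let ?A = "Poly_Mapping.keys P \<union> Poly_Mapping.keys Q"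
  have "norm1 (P + Q) = (\<Sum>m\<in>?A. \<bar>Poly_Mapping.lookup (P + Q) m\<bar>)"
    by (rule norm1_superset) (simp_all add: keys_add)
  also have "\<dots> \<le> (\<Sum>m\<in>?A. \<bar>Poly_Mapping.lookup P m\<bar> + \<bar>Poly_Mapping.lookup Q m\<bar>)"
    by (intro sum_mono) (simp add: lookup_add abs_triangle_ineq)
  also have "\<dots> = norm1 P + norm1 Q"
    by (simp add: sum.distrib norm1_superset[of ?A])
  finally show ?thesis .
qed

lemma norm1_sum: "norm1 (sum f I) \<le> (\<Sum>i\<in>I. norm1 (f i))"
proof (induction I rule: infinite_finite_induct)
  case (insert x I)
  then show ?case
    using norm1_add[of "f x" "sum f I"] by simp
qed (simp_all add: norm1_def)

lemma poly_mapping_sum_single: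
  "P = (\<Sum>a\<in>Poly_Mapping.keys P. Poly_Mapping.single a (Poly_Mapping.lookup P a))"
  by (rule poly_mapping_eqI) (auto simp: lookup_sum lookup_single when_def in_keys_iff)

lemma times_poly_mapping_sum_single:
  fixes P Q :: "'a::monoid_add \<Rightarrow>\<^sub>0 real"
  shows "P * Q = (\<Sum>a\<in>Poly_Mapping.keys P. \<Sum>b\<in>Poly_Mapping.keys Q.
    Poly_Mapping.single (a + b) (Poly_Mapping.lookup P a * Poly_Mapping.lookup Q b))"
proof -
  have "P * Q = (\<Sum>a\<in>Poly_Mapping.keys P. Poly_Mapping.single a (Poly_Mapping.lookup P a)) *
      (\<Sum>b\<in>Poly_Mapping.keys Q. Poly_Mapping.single b (Poly_Mapping.lookup Q b))"
    using poly_mapping_sum_single[of P] poly_mapping_sum_single[of Q] by simp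
  then show ?thesis
    by (simp add: sum_product mult_single)
qed

lemma norm1_mult:
  fixes P Q :: "'a::monoid_add \<Rightarrow>\<^sub>0 real"
  shows "norm1 (P * Q) \<le> norm1 P * norm1 Q"
proof -
  have "norm1 (P * Q) \<le> (\<Sum>a\<in>Poly_Mapping.keys P. norm1 (\<Sum>b\<in>Poly_Mapping.keys Q.
      Poly_Mapping.single (a + b) (Poly_Mapping.lookup P a * Poly_Mapping.lookup Q b)))"
    by (subst times_poly_mapping_sum_single) (rule norm1_sum)
  also have "\<dots> \<le> (\<Sum>a\<in>Poly_Mapping.keys P. \<Sum>b\<in>Poly_Mapping.keys Q.
      \<bar>Poly_Mapping.lookup P a\<bar> * \<bar>Poly_Mapping.lookup Q b\<bar>)"
    by (intro sum_mono order.trans[OF norm1_sum]) (simp add: abs_mult)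
  also have "\<dots> = norm1 P * norm1 Q"
    by (simp add: norm1_def sum_product)
  finally show ?thesis .
qed

lemma norm1_power:
  fixes P :: "'a::monoid_add \<Rightarrow>\<^sub>0 real"
  shows "norm1 (P ^ k) \<le> norm1 P ^ k"
proof (induction k)
  case 0
  then show ?case
    by (simp flip: single_one)
next
  case (Suc k)
  have "norm1 (P ^ Suc k) \<le> norm1 P * norm1 (P ^ k)"
    by (simp add: norm1_mult)
  also have "\<dots> \<le> norm1 P * norm1 P ^ k"
    by (intro mult_left_mono Suc norm1_nonneg)
  finally show ?case
    by simp
qed

lemma norm1_power_le:
  fixes P :: "'a::monoid_add \<Rightarrow>\<^sub>0 real"
  assumes "norm1 P \<le> A"
  shows "norm1 (P ^ k) \<le> A ^ k"
  using norm1_power[of P k] power_mono[OF assms norm1_nonneg, of k] by linarith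

lemma norm1_diff_mult:
  fixes X X' Y Y' :: "'a::monoid_add \<Rightarrow>\<^sub>0 real"
  assumes "norm1 X \<le> A" "norm1 (X - X') \<le> e" "norm1 Y' \<le> B" "norm1 (Y - Y') \<le> f"
  shows "norm1 (X * Y - X' * Y') \<le> A * f + e * B"
proof -
  have "X * Y - X' * Y' = X * (Y - Y') + (X - X') * Y'"
    by (simp add: algebra_simps)
  then have "norm1 (X * Y - X' * Y') \<le> norm1 (X * (Y - Y')) + norm1 ((X - X') * Y')"
    by (simp add: norm1_add)
  also have "\<dots> \<le> norm1 X * norm1 (Y - Y') + norm1 (X - X') * norm1 Y'"
    by (intro add_mono norm1_mult)
  also have "\<dots> \<le> A * f + e * B"
    using assms norm1_nonneg by (intro add_mono mult_mono) (auto intro: order.trans)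
  finally show ?thesis .
qed

text \<open>Telescoping: each of the \<open>\<Sum> f\<close> factors is exchanged at cost \<open>e\<close> against a product of
  norm at most \<open>A ^ \<Sum> f\<close>.\<close>
lemma norm1_diff_prod_power:
  fixes X Y :: "'i \<Rightarrow> 'a::comm_monoid_add \<Rightarrow>\<^sub>0 real"
  assumes "finite S" "1 \<le> A"
    and "\<And>i. i \<in> S \<Longrightarrow> norm1 (X i) \<le> A \<and> norm1 (Y i) \<le> A \<and> norm1 (X i - Y i) \<le> e"
  shows "norm1 ((\<Prod>i\<in>S. X i ^ f i) - (\<Prod>i\<in>S. Y i ^ f i)) \<le> real (sum f S) * A ^ sum f S * e"
  using assms(1,3)
proof (induction S rule: finite_induct)
  case empty
  then show ?case
    by (simp add: norm1_def)
next
  case (insert x S)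
  have hx: "norm1 (X x) \<le> A" "norm1 (Y x) \<le> A" "norm1 (X x - Y x) \<le> e"
    using insert.prems by auto
  have "norm1 (X x ^ k - Y x ^ k) \<le> real k * A ^ k * e" for k
  proof (induction k)
    case (Suc k)
    have "norm1 (X x * X x ^ k - Y x * Y x ^ k) \<le> A * (real k * A ^ k * e) + e * A ^ k"
      using hx Suc norm1_power_le by (intro norm1_diff_mult)
    also have "\<dots> \<le> A * (real k * A ^ k * e) + e * A ^ Suc k"
      using hx(3) norm1_nonneg[of "X x - Y x"] assms(2)
      by (intro add_left_mono mult_left_mono) (auto intro: power_increasing)
    finally show ?case
      by (simp add: algebra_simps)
  qed (simp add: norm1_def)
  moreover have "norm1 (\<Prod>i\<in>S. Y i ^ f i) \<le> A ^ sum f S"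
    using insert.hyps(1) insert.prems
  proof (induction S rule: finite_induct)
    case (insert y S)
    have "norm1 (Y y ^ f y) \<le> A ^ f y"
      using insert.prems by (intro norm1_power_le) auto
    then have "norm1 (Y y ^ f y * (\<Prod>i\<in>S. Y i ^ f i)) \<le> A ^ f y * A ^ sum f S"
      using insert assms(2) by (intro order.trans[OF norm1_mult] mult_mono norm1_nonneg) auto
    then show ?case
      using insert.hyps by (simp add: power_add)
  qed (simp flip: single_one)
  ultimately have "norm1 (X x ^ f x * (\<Prod>i\<in>S. X i ^ f i) - Y x ^ f x * (\<Prod>i\<in>S. Y i ^ f i))
      \<le> A ^ f x * (real (sum f S) * A ^ sum f S * e) + real (f x) * A ^ f x * e * A ^ sum f S"
    using insert hx by (intro norm1_diff_mult norm1_power_le) auto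
  then show ?case
    using insert.hyps by (simp add: algebra_simps power_add)
qed

section \<open>Substitution of linear forms into a form\<close>

fun deg_monoms :: "nat \<Rightarrow> nat \<Rightarrow> (nat \<Rightarrow>\<^sub>0 nat) set" where
  "deg_monoms n 0 = {0}"
| "deg_monoms n (Suc d) = {Poly_Mapping.single j 1 + a | j a. j < n \<and> a \<in> deg_monoms n d}"

lemma deg_monoms_add:
  "a \<in> deg_monoms n d \<Longrightarrow> b \<in> deg_monoms n e \<Longrightarrow> a + b \<in> deg_monoms n (d + e)"
proof (induction d arbitrary: a)
  case (Suc d)
  then obtain j a' where "j < n" "a' \<in> deg_monoms n d" "a = Poly_Mapping.single j 1 + a'"
    by auto
  then show ?case
    using Suc.IH Suc.prems(2) by (auto simp: add.assoc)
qed simp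

lemma keys_mult_deg_monoms:
  assumes "Poly_Mapping.keys (P :: mpoly) \<subseteq> deg_monoms n d" "Poly_Mapping.keys Q \<subseteq> deg_monoms n e"
  shows "Poly_Mapping.keys (P * Q) \<subseteq> deg_monoms n (d + e)"
  using keys_mult[of P Q] assms deg_monoms_add by blast

lemma keys_prod_power_deg_monoms:
  assumes "finite S" "\<And>i. i \<in> S \<Longrightarrow> Poly_Mapping.keys (X i :: mpoly) \<subseteq> deg_monoms n 1"
  shows "Poly_Mapping.keys (\<Prod>i\<in>S. X i ^ f i) \<subseteq> deg_monoms n (sum f S)"
  using assms
proof (induction S rule: finite_induct)
  case (insert x S)
  have "Poly_Mapping.keys (X x ^ k) \<subseteq> deg_monoms n k" for k
    using keys_mult_deg_monoms[OF insert.prems[of x]] by (induction k) auto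
  moreover have "Poly_Mapping.keys (\<Prod>i\<in>S. X i ^ f i) \<subseteq> deg_monoms n (sum f S)"
    using insert.prems by (intro insert.IH) auto
  ultimately show ?case
    using insert.hyps keys_mult_deg_monoms by simp
qed simp

lemma keys_lin_subst: "Poly_Mapping.keys (lin_subst n M i) \<subseteq> deg_monoms n 1"
proof -
  have "Poly_Mapping.keys (lin_subst n M i)
      \<subseteq> (\<Union>j<n. Poly_Mapping.keys (Poly_Mapping.single (Poly_Mapping.single j 1) (M i j)))"
    unfolding lin_subst_def by (rule keys_sum)
  also have "\<dots> \<subseteq> deg_monoms n 1"
    by auto
  finally show ?thesis .
qed

lemma lookup_single_0_mult:
  fixes P :: "'a::monoid_add \<Rightarrow>\<^sub>0 real"
  shows "Poly_Mapping.lookup (Poly_Mapping.single 0 c * P) x = c * Poly_Mapping.lookup P x"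
  by (simp flip: mult_map_scale_conv_mult add: Poly_Mapping.map.rep_eq when_def)

lemma keys_single_0_mult:
  fixes P :: "'a::monoid_add \<Rightarrow>\<^sub>0 real"
  shows "Poly_Mapping.keys (Poly_Mapping.single 0 c * P) \<subseteq> Poly_Mapping.keys P"
  by (auto simp: in_keys_iff lookup_single_0_mult)

lemma keys_subst_lin_subst:
  assumes "\<forall>\<beta>\<in>Poly_Mapping.keys F. mdeg \<beta> = d"
  shows "Poly_Mapping.keys (subst F (lin_subst n M)) \<subseteq> deg_monoms n d"
  unfolding subst_def
proof (intro order.trans[OF keys_sum] UN_least)
  fix \<beta> assume \<beta>: "\<beta> \<in> Poly_Mapping.keys F"
  have "Poly_Mapping.keys (\<Prod>i\<in>Poly_Mapping.keys \<beta>. lin_subst n M i ^ Poly_Mapping.lookup \<beta> i)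
      \<subseteq> deg_monoms n (mdeg \<beta>)"
    unfolding mdeg_def by (intro keys_prod_power_deg_monoms keys_lin_subst) simp
  then have "Poly_Mapping.keys (\<Prod>i\<in>Poly_Mapping.keys \<beta>. lin_subst n M i ^ Poly_Mapping.lookup \<beta> i)
      \<subseteq> deg_monoms n d"
    using assms \<beta> by simp
  then show "Poly_Mapping.keys (Poly_Mapping.single 0 (Poly_Mapping.lookup F \<beta>) *
      (\<Prod>i\<in>Poly_Mapping.keys \<beta>. lin_subst n M i ^ Poly_Mapping.lookup \<beta> i)) \<subseteq> deg_monoms n d"
    using keys_single_0_mult by blast
qed

definition nonneg_coeffs :: "('a \<Rightarrow>\<^sub>0 real) \<Rightarrow> bool" where
  "nonneg_coeffs P \<longleftrightarrow> (\<forall>x. 0 \<le> Poly_Mapping.lookup P x)"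

lemma lookup_times_poly_mapping:
  fixes P Q :: "'a::monoid_add \<Rightarrow>\<^sub>0 real"
  shows "Poly_Mapping.lookup (P * Q) x = (\<Sum>a\<in>Poly_Mapping.keys P. \<Sum>b\<in>Poly_Mapping.keys Q.
    if a + b = x then Poly_Mapping.lookup P a * Poly_Mapping.lookup Q b else 0)"
  by (subst times_poly_mapping_sum_single) (simp add: lookup_sum lookup_single when_def)

lemma nonneg_coeffs_mult:
  fixes P Q :: "'a::monoid_add \<Rightarrow>\<^sub>0 real"
  shows "nonneg_coeffs P \<Longrightarrow> nonneg_coeffs Q \<Longrightarrow> nonneg_coeffs (P * Q)"
  unfolding nonneg_coeffs_def lookup_times_poly_mapping by (auto intro!: sum_nonneg)

lemma nonneg_coeffs_power:
  fixes P :: "'a::monoid_add \<Rightarrow>\<^sub>0 real"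
  assumes "nonneg_coeffs P"
  shows "nonneg_coeffs (P ^ k)"
proof (induction k)
  case 0
  then show ?case
    by (simp add: nonneg_coeffs_def lookup_single when_def flip: single_one)
next
  case (Suc k)
  then show ?case
    using nonneg_coeffs_mult[OF assms] by simp
qed

lemma lookup_mult_ge:
  fixes P Q :: "'a::monoid_add \<Rightarrow>\<^sub>0 real"
  assumes "nonneg_coeffs P" "nonneg_coeffs Q"
  shows "Poly_Mapping.lookup P a * Poly_Mapping.lookup Q b \<le> Poly_Mapping.lookup (P * Q) (a + b)"
proof (cases "a \<in> Poly_Mapping.keys P \<and> b \<in> Poly_Mapping.keys Q")
  case True
  let ?t = "\<lambda>a' b'. if a' + b' = a + b then Poly_Mapping.lookup P a' * Poly_Mapping.lookup Q b' else 0"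
  have nonneg: "0 \<le> ?t a' b'" for a' b'
    using assms by (simp add: nonneg_coeffs_def)
  have "Poly_Mapping.lookup P a * Poly_Mapping.lookup Q b \<le> (\<Sum>b'\<in>Poly_Mapping.keys Q. ?t a b')"
    using True member_le_sum[of b "Poly_Mapping.keys Q" "?t a"] nonneg by simp
  also have "\<dots> \<le> (\<Sum>a'\<in>Poly_Mapping.keys P. \<Sum>b'\<in>Poly_Mapping.keys Q. ?t a' b')"
    using True nonneg by (intro member_le_sum sum_nonneg) auto
  finally show ?thesis
    by (simp add: lookup_times_poly_mapping)
next
  case False
  then show ?thesis
    using nonneg_coeffs_mult[OF assms] by (auto simp: in_keys_iff nonneg_coeffs_def)
qed

lemma single_eq_single_iff_key:
  "v \<noteq> 0 \<Longrightarrow> Poly_Mapping.single i v = Poly_Mapping.single j v \<longleftrightarrow> i = j"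
  by (metis lookup_single_eq lookup_single_not_eq)

definition var_sum :: "nat \<Rightarrow> mpoly" where
  "var_sum n = (\<Sum>j<n. Poly_Mapping.single (Poly_Mapping.single j 1) 1)"

lemma nonneg_coeffs_var_sum: "nonneg_coeffs (var_sum n)"
  by (auto simp: nonneg_coeffs_def var_sum_def lookup_sum lookup_single when_def intro!: sum_nonneg)

lemma lookup_var_sum: "j < n \<Longrightarrow> Poly_Mapping.lookup (var_sum n) (Poly_Mapping.single j 1) = 1"
  by (simp add: var_sum_def lookup_sum lookup_single when_def single_eq_single_iff_key)

lemma lookup_var_sum_power_ge_1:
  "\<alpha> \<in> deg_monoms n d \<Longrightarrow> 1 \<le> Poly_Mapping.lookup (var_sum n ^ d) \<alpha>"
proof (induction d arbitrary: \<alpha>)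
  case (Suc d)
  then obtain j a where ja: "j < n" "a \<in> deg_monoms n d" "\<alpha> = Poly_Mapping.single j 1 + a"
    by auto
  have "1 \<le> Poly_Mapping.lookup (var_sum n) (Poly_Mapping.single j 1) * Poly_Mapping.lookup (var_sum n ^ d) a"
    using Suc.IH[OF ja(2)] lookup_var_sum[OF ja(1)] by simp
  also have "\<dots> \<le> Poly_Mapping.lookup (var_sum n * var_sum n ^ d) \<alpha>"
    unfolding ja(3) by (intro lookup_mult_ge nonneg_coeffs_var_sum nonneg_coeffs_power)
  finally show ?case
    by simp
qed simp

lemma single_0_power: "(Poly_Mapping.single 0 a :: 'a::monoid_add \<Rightarrow>\<^sub>0 'b::semiring_1) ^ k = Poly_Mapping.single 0 (a ^ k)"
  by (induction k) (simp_all add: mult_single)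

lemma single_0_prod: "(\<Prod>i\<in>S. Poly_Mapping.single 0 (g i) :: 'a::comm_monoid_add \<Rightarrow>\<^sub>0 'b::comm_semiring_1) = Poly_Mapping.single 0 (\<Prod>i\<in>S. g i)"
  by (induction S rule: infinite_finite_induct) (simp_all add: mult_single)

lemma single_0_sum: "(\<Sum>i\<in>S. Poly_Mapping.single 0 (g i) :: 'a::zero \<Rightarrow>\<^sub>0 'b::comm_monoid_add) = Poly_Mapping.single 0 (\<Sum>i\<in>S. g i)"
  by (induction S rule: infinite_finite_induct) (simp_all add: single_add)

lemma lin_subst_const_rows:
  "lin_subst n (\<lambda>i j. p i) i = Poly_Mapping.single 0 (p i) * var_sum n"
  by (simp add: lin_subst_def var_sum_def sum_distrib_left mult_single)

text \<open>All columns of the matrix \<open>\<lambda>i j. p i\<close> equal \<open>p\<close>, so it maps \<open>X\<close> to \<open>(x\<^sub>1 + \<dots> + x\<^sub>n) p\<close>.\<close>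
lemma subst_const_rows:
  assumes "\<forall>\<beta>\<in>Poly_Mapping.keys F. mdeg \<beta> = d"
  shows "subst F (lin_subst n (\<lambda>i j. p i)) = Poly_Mapping.single 0 (eval F p) * var_sum n ^ d"
proof -
  have "Poly_Mapping.single 0 (Poly_Mapping.lookup F \<beta>) *
      (\<Prod>i\<in>Poly_Mapping.keys \<beta>. lin_subst n (\<lambda>i j. p i) i ^ Poly_Mapping.lookup \<beta> i)
    = Poly_Mapping.single 0 (Poly_Mapping.lookup F \<beta> *
      (\<Prod>i\<in>Poly_Mapping.keys \<beta>. p i ^ Poly_Mapping.lookup \<beta> i)) * var_sum n ^ d"
    if "\<beta> \<in> Poly_Mapping.keys F" for \<beta>
    using assms that
    by (simp add: lin_subst_const_rows power_mult_distrib single_0_power prod.distrib single_0_prod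
        mdeg_def mult_single flip: power_sum mult.assoc)
  then show ?thesis
    unfolding subst_def eval_def
    by (simp add: sum_distrib_right[symmetric] single_0_sum cong: sum.cong)
qed

lemma norm1_lin_subst_le:
  assumes "\<And>j. j < n \<Longrightarrow> \<bar>M i j\<bar> \<le> a"
  shows "norm1 (lin_subst n M i) \<le> real n * a"
proof -
  have "norm1 (lin_subst n M i) \<le> (\<Sum>j<n. \<bar>M i j\<bar>)"
    unfolding lin_subst_def by (rule order.trans[OF norm1_sum]) simp
  also have "\<dots> \<le> (\<Sum>j<n. a)"
    using assms by (intro sum_mono) simp
  finally show ?thesis
    by simp
qed

lemma lin_subst_diff:
  "lin_subst n M i - lin_subst n R i = lin_subst n (\<lambda>i j. M i j - R i j) i"
  by (simp add: lin_subst_def sum_subtractf single_diff)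

lemma norm1_subst_diff:
  assumes "\<forall>\<beta>\<in>Poly_Mapping.keys F. mdeg \<beta> = d" "1 \<le> A"
    and "\<And>i. i \<in> \<Union>(Poly_Mapping.keys ` Poly_Mapping.keys F) \<Longrightarrow>
      norm1 (L i) \<le> A \<and> norm1 (L' i) \<le> A \<and> norm1 (L i - L' i) \<le> e"
  shows "norm1 (subst F L - subst F L') \<le> norm1 F * (real d * A ^ d * e)"
proof -
  have "norm1 (subst F L - subst F L') \<le> (\<Sum>\<beta>\<in>Poly_Mapping.keys F.
      norm1 (Poly_Mapping.single 0 (Poly_Mapping.lookup F \<beta>) *
        ((\<Prod>i\<in>Poly_Mapping.keys \<beta>. L i ^ Poly_Mapping.lookup \<beta> i) -
         (\<Prod>i\<in>Poly_Mapping.keys \<beta>. L' i ^ Poly_Mapping.lookup \<beta> i))))"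
    unfolding subst_def by (simp add: norm1_sum flip: sum_subtractf right_diff_distrib)
  also have "\<dots> \<le> (\<Sum>\<beta>\<in>Poly_Mapping.keys F. \<bar>Poly_Mapping.lookup F \<beta>\<bar> * (real d * A ^ d * e))"
  proof (rule sum_mono)
    fix \<beta> assume \<beta>: "\<beta> \<in> Poly_Mapping.keys F"
    have "norm1 ((\<Prod>i\<in>Poly_Mapping.keys \<beta>. L i ^ Poly_Mapping.lookup \<beta> i) -
        (\<Prod>i\<in>Poly_Mapping.keys \<beta>. L' i ^ Poly_Mapping.lookup \<beta> i)) \<le> real (mdeg \<beta>) * A ^ mdeg \<beta> * e"
      unfolding mdeg_def using assms(2,3) \<beta> by (intro norm1_diff_prod_power) auto
    then show "norm1 (Poly_Mapping.single 0 (Poly_Mapping.lookup F \<beta>) *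
        ((\<Prod>i\<in>Poly_Mapping.keys \<beta>. L i ^ Poly_Mapping.lookup \<beta> i) -
         (\<Prod>i\<in>Poly_Mapping.keys \<beta>. L' i ^ Poly_Mapping.lookup \<beta> i)))
      \<le> \<bar>Poly_Mapping.lookup F \<beta>\<bar> * (real d * A ^ d * e)"
      using assms(1) \<beta> by (intro order.trans[OF norm1_mult]) (simp add: mult_left_mono)
  qed
  also have "\<dots> = norm1 F * (real d * A ^ d * e)"
    by (simp add: norm1_def sum_distrib_right)
  finally show ?thesis .
qed

text \<open>The substitution of a matrix close to a matrix with constant rows \<open>p\<close> stays close to
  \<open>F(p) (x\<^sub>1 + \<dots> + x\<^sub>n)\<^sup>d\<close>, whose coefficients on all monomials of degree \<open>d\<close> are at least \<open>F(p)\<close>.\<close>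
lemma lookup_subst_nonneg_near_const_rows:
  assumes F: "in_vars n F" "\<forall>\<beta>\<in>Poly_Mapping.keys F. mdeg \<beta> = d" and "1 \<le> n"
    and M: "\<And>i j. i < n \<Longrightarrow> j < n \<Longrightarrow> \<bar>M i j\<bar> \<le> 1 \<and> \<bar>p i\<bar> \<le> 1 \<and> \<bar>M i j - p i\<bar> \<le> \<eta>"
    and small: "norm1 F * (real d * real n ^ d * (real n * \<eta>)) \<le> eval F p"
  shows "0 \<le> Poly_Mapping.lookup (subst F (lin_subst n M)) \<alpha>"
proof (cases "\<alpha> \<in> deg_monoms n d")
  case True
  let ?G = "subst F (lin_subst n M)" and ?G' = "subst F (lin_subst n (\<lambda>i j. p i))"
  have "norm1 (lin_subst n M i) \<le> real n \<and> norm1 (lin_subst n (\<lambda>i j. p i) i) \<le> real n \<and>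
      norm1 (lin_subst n M i - lin_subst n (\<lambda>i j. p i) i) \<le> real n * \<eta>" if "i < n" for i
    using M[OF that] norm1_lin_subst_le[of n M i 1] norm1_lin_subst_le[of n "\<lambda>i j. p i" i 1]
      norm1_lin_subst_le[of n "\<lambda>i j. M i j - p i" i \<eta>]
    by (simp add: lin_subst_diff)
  moreover have "\<Union>(Poly_Mapping.keys ` Poly_Mapping.keys F) \<subseteq> {..<n}"
    using F(1) by (auto simp: in_vars_def)
  ultimately have "norm1 (?G - ?G') \<le> norm1 F * (real d * real n ^ d * (real n * \<eta>))"
    using \<open>1 \<le> n\<close> by (intro norm1_subst_diff[OF F(2)]) auto
  then have "norm1 (?G - ?G') \<le> eval F p"
    using small by linarith
  then have "\<bar>Poly_Mapping.lookup ?G \<alpha> - Poly_Mapping.lookup ?G' \<alpha>\<bar> \<le> eval F p"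
    using abs_lookup_le_norm1[of "?G - ?G'" \<alpha>] by (simp add: lookup_minus)
  moreover have "0 \<le> \<eta>"
    using M[of 0 0] \<open>1 \<le> n\<close> by auto
  then have "0 \<le> norm1 F * (real d * real n ^ d * (real n * \<eta>))"
    by (simp add: norm1_nonneg)
  then have "0 \<le> eval F p"
    using small by linarith
  then have "eval F p \<le> Poly_Mapping.lookup ?G' \<alpha>"
    using lookup_var_sum_power_ge_1[OF True]
    by (simp add: subst_const_rows[OF F(2)] lookup_single_0_mult mult_le_cancel_left1)
  ultimately show ?thesis
    by linarith
next
  case False
  then have "\<alpha> \<notin> Poly_Mapping.keys (subst F (lin_subst n M))"
    using keys_subst_lin_subst[OF F(2), of n M] by blast
  then show ?thesis
    by (simp add: in_keys_iff)
qed

section \<open>Positive termination\<close>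

definition std_simplex :: "nat \<Rightarrow> (nat \<Rightarrow> real) set" where
  "std_simplex n = {x. (\<forall>i<n. 0 \<le> x i) \<and> (\<forall>i\<ge>n. x i = 0) \<and> (\<Sum>i<n. x i) = 1}"

lemma compact_std_simplex: "compact (std_simplex n)"
proof -
  define S where "S i = (if i < n then {0..1::real} else {0})" for i
  have "compactin (product_topology (\<lambda>_. euclidean) UNIV) (PiE UNIV S)"
    by (subst compactin_PiE) (auto simp: S_def)
  then have "compact (Pi UNIV S)"
    by (simp add: euclidean_product_topology PiE_UNIV_domain)
  moreover have "closed {x::nat \<Rightarrow> real. (\<Sum>i<n. x i) = 1}"
    by (intro closed_Collect_eq continuous_intros continuous_on_product_coordinates)
  moreover have "std_simplex n = Pi UNIV S \<inter> {x. (\<Sum>i<n. x i) = 1}"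
  proof -
    have "x i \<le> 1" if "x \<in> std_simplex n" "i < n" for x i
      using that member_le_sum[of i "{..<n}" x] by (simp add: std_simplex_def)
    then show ?thesis
      by (auto simp: std_simplex_def S_def Pi_def split: if_splits)
  qed
  ultimately show ?thesis
    by (simp add: compact_Int_closed)
qed

lemma std_simplex_nonempty: "1 \<le> n \<Longrightarrow> std_simplex n \<noteq> {}"
  by (auto simp: std_simplex_def intro!: exI[of _ "\<lambda>i. if i = 0 then 1 else 0"])

lemma continuous_on_eval: "continuous_on S (eval F)"
  unfolding eval_def
  by (rule continuous_on_subset[OF _ subset_UNIV], intro continuous_intros continuous_on_product_coordinates)

lemma eval_std_simplex_lower_bound:
  assumes "1 \<le> n" and pos: "\<forall>x. (\<forall>i<n. 0 \<le> x i) \<and> (\<Sum>i<n. x i) = 1 \<longrightarrow> 0 < eval F x"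
  shows "\<exists>\<mu>>0. \<forall>x\<in>std_simplex n. \<mu> \<le> eval F x"
proof -
  obtain x0 where "x0 \<in> std_simplex n" "\<forall>x\<in>std_simplex n. eval F x0 \<le> eval F x"
    using continuous_attains_inf[OF compact_std_simplex std_simplex_nonempty[OF assms(1)] continuous_on_eval]
    by blast
  moreover from this(1) have "0 < eval F x0"
    using pos by (simp add: std_simplex_def)
  ultimately show ?thesis
    by blast
qed

lemma ex_mult_power_le:
  fixes C q \<mu> :: real
  assumes "0 \<le> q" "q < 1" "0 < \<mu>"
  shows "\<exists>m>0. C * q ^ m \<le> \<mu>"
proof -
  have "(\<lambda>m. C * q ^ m) \<longlonglongrightarrow> C * 0"
    using assms by (intro tendsto_mult tendsto_const LIMSEQ_power_zero) auto
  then have "eventually (\<lambda>m. C * q ^ m < \<mu> \<and> 0 < m) sequentially"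
    using assms(3) by (auto intro: eventually_conj order_tendstoD eventually_gt_at_top)
  then obtain m where "C * q ^ m < \<mu>" "0 < m"
    unfolding eventually_sequentially by blast
  then show ?thesis
    by (intro exI[of _ m]) auto
qed

text \<open>Each column of the product lies within \<open>2 (1 - 1/n)\<^sup>m\<close> of its first column \<open>p\<close>,
  which is a point of the simplex.\<close>
lemma SDS_coeff_nonneg:
  assumes "1 \<le> n" and F: "in_vars n F" "\<forall>\<beta>\<in>Poly_Mapping.keys F. mdeg \<beta> = d"
    and \<mu>: "\<forall>x\<in>std_simplex n. \<mu> \<le> eval F x"
    and small: "norm1 F * (real d * real n ^ d * (real n * (2 * (1 - 1 / real n) ^ m))) \<le> \<mu>"
    and "G \<in> SDS n m F"
  shows "0 \<le> coeff G \<alpha>"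
proof -
  obtain Bs where Bs: "length Bs = m" "\<forall>B\<in>set Bs. B \<in> PW n"
    and G: "G = subst F (lin_subst n (mprod_list n Bs))"
    using \<open>G \<in> SDS n m F\<close> unfolding SDS_def by blast
  define M where "M = mprod_list n Bs"
  define p where "p i = (if i < n then M i 0 else 0)" for i
  have M: "col_stochastic n M"
    unfolding M_def by (rule col_stochastic_mprod_list_PW[OF Bs(2)])
  have "p \<in> std_simplex n"
    using M \<open>1 \<le> n\<close> by (simp add: std_simplex_def p_def col_stochastic_def)
  then have "\<mu> \<le> eval F p"
    using \<mu> by blast
  moreover have "\<bar>M i j\<bar> \<le> 1 \<and> \<bar>p i\<bar> \<le> 1 \<and> \<bar>M i j - p i\<bar> \<le> 2 * (1 - 1 / real n) ^ m"
    if "i < n" "j < n" for i j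
  proof -
    have "\<bar>M i j - M i 0\<bar> \<le> (\<Sum>i<n. \<bar>M i j - M i 0\<bar>)"
      using that by (intro member_le_sum) auto
    moreover have "0 \<le> M i l \<and> M i l \<le> 1" if "l < n" for l
      using M \<open>i < n\<close> that col_stochastic_le_1 by (auto simp: col_stochastic_def)
    ultimately show ?thesis
      using mprod_list_PW_col_dist[OF Bs(2) \<open>1 \<le> n\<close> that(2), of 0] \<open>1 \<le> n\<close> that
      by (simp add: M_def p_def Bs(1))
  qed
  ultimately show ?thesis
    unfolding coeff_def G M_def[symmetric] using small
    by (intro lookup_subst_nonneg_near_const_rows[OF F \<open>1 \<le> n\<close>]) auto
qed

theorem theorem4p1:
  fixes n :: nat and F :: mpoly
  assumes "n \<ge> 1"
    and "in_vars n F"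
    and "is_form F"
    and "\<forall>x. (\<forall>i<n. x i \<ge> 0) \<and> (\<Sum>i<n. x i) = 1 \<longrightarrow> eval F x > 0"
  shows "\<exists>k>0. \<forall>G\<in>SDS n k F. \<forall>m. coeff G m \<ge> 0"
proof -
  obtain d where d: "\<forall>\<beta>\<in>Poly_Mapping.keys F. mdeg \<beta> = d"
    using assms(3) unfolding is_form_def by blast
  obtain \<mu> where "0 < \<mu>" and \<mu>: "\<forall>x\<in>std_simplex n. \<mu> \<le> eval F x"
    using eval_std_simplex_lower_bound[OF assms(1,4)] by blast
  moreover have "0 \<le> 1 - 1 / real n" "1 - 1 / real n < 1"
    using assms(1) by auto
  ultimately obtain k where "0 < k"
    and "norm1 F * (real d * real n ^ d * (real n * 2)) * (1 - 1 / real n) ^ k \<le> \<mu>"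
    using ex_mult_power_le by blast
  then have "norm1 F * (real d * real n ^ d * (real n * (2 * (1 - 1 / real n) ^ k))) \<le> \<mu>"
    by (simp add: algebra_simps)
  then show ?thesis
    using SDS_coeff_nonneg[OF assms(1,2) d \<mu>] \<open>0 < k\<close> by blast
qed

end
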